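(* Let $\mathcal{A}\subset\mathbb{R}^d$ be a finite multiset with $|\mathcal{A}|=(d+1)n+1$, $n\in\mathbb{Z}_{\ge 0}$, and let $l:\mathbb{R}^d\to\mathbb{R}$ be a linear function. Then: (1) if at least $dn+1$ points $\bar{x}$ of $\mathcal{A}$ satisfy $l(\bar{x})\le m$ for some $m\in\mathbb{R}$, then $l(y)\le m$ for every $y\in\varPsi(\mathcal{A},n)$; (2) if at least $dn+1$ points $\bar{x}$ of $\mathcal{A}$ satisfy $l(\bar{x})\ge M$ for some $M\in\mathbb{R}$, then $l(z)\ge M$ for every $z\in\varPsi(\mathcal{A},n)$.
   Context: Cardinality of a multiset counts points with multiplicity. For a finite multiset $\mathcal{A}\subset\mathbb{R}^d$ of cardinality $m'$ and integer $0\le n\le m'$, $\mathcal{S}(\mathcal{A},n)$ is the collection of all sub-multisets of $\mathcal{A}$ of cardinality $m'-n$, and $\varPsi(\mathcal{A},n)=\bigcap_{S\in\mathcal{S}(\mathcal{A},n)}\mathrm{Conv}(S)$, where $\mathrm{Conv}$ denotes convex hull. *)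

theory Defs
  imports "HOL-Analysis.Analysis" "HOL-Library.Multiset"
begin

definition subms :: "'a multiset \<Rightarrow> nat \<Rightarrow> 'a multiset set" where
  "subms A n = {S. S \<subseteq># A \<and> size S = size A - n}"

definition Psi :: "'a::real_vector multiset \<Rightarrow> nat \<Rightarrow> 'a set" where
  "Psi A n = (\<Inter>S\<in>subms A n. convex hull (set_mset S))"

end

theory Submission
  imports Defs
begin

text \<open>As soon as \<open>|A| - n\<close> points of \<open>A\<close>, counted with multiplicity, lie in a convex set \<open>C\<close>,
  some member of \<open>S(A, n)\<close> is supported in \<open>C\<close>; its convex hull, hence \<open>\<Psi>(A, n)\<close>, lies in \<open>C\<close>.
  Apply this to the half-spaces \<open>l \<le> m\<close> and \<open>l \<ge> M\<close>, using \<open>|A| - n = d n + 1\<close>.\<close>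

lemma obtain_subset_mset_of_size:
  assumes "k \<le> size B"
  obtains S where "S \<subseteq># B" and "size S = k"
proof -
  obtain xs where xs: "mset xs = B" using ex_mset by blast
  then have "mset (take k xs) \<subseteq># B"
    by (metis append_take_drop_id mset_append mset_subset_eq_add_left)
  moreover have "size (mset (take k xs)) = k" using assms xs by auto
  ultimately show thesis using that by blast
qed

lemma Psi_subset_convex:
  assumes "convex C" and "size A - n \<le> size (filter_mset (\<lambda>x. x \<in> C) A)"
  shows "Psi A n \<subseteq> C"
proof -
  obtain S where S: "S \<subseteq># filter_mset (\<lambda>x. x \<in> C) A" "size S = size A - n"
    using obtain_subset_mset_of_size[OF assms(2)] by blast
  then have "S \<in> subms A n"
    unfolding subms_def by (blast intro: subset_mset.order_trans multiset_filter_subset)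
  moreover have "convex hull set_mset S \<subseteq> C"
    using S(1) assms(1) by (intro hull_minimal) (auto dest: mset_subset_eqD)
  ultimately show ?thesis unfolding Psi_def by blast
qed

lemma convex_linear_sublevel:
  fixes l :: "'a::real_vector \<Rightarrow> real"
  assumes "linear l"
  shows "convex {x. l x \<le> m}"
  using convex_linear_vimage[OF assms convex_real_interval(2)[of m]] by (simp add: vimage_def)

lemma convex_linear_superlevel:
  fixes l :: "'a::real_vector \<Rightarrow> real"
  assumes "linear l"
  shows "convex {x. l x \<ge> m}"
  using convex_linear_vimage[OF assms convex_real_interval(1)[of m]] by (simp add: vimage_def)

theorem lemma4:
  fixes A :: "'a::euclidean_space multiset" and n :: nat and l :: "'a \<Rightarrow> real"
  assumes "size A = (DIM('a) + 1) * n + 1"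
    and "linear l"
  shows "(\<forall>m::real. size (filter_mset (\<lambda>x. l x \<le> m) A) \<ge> DIM('a) * n + 1
            \<longrightarrow> (\<forall>y\<in>Psi A n. l y \<le> m))
         \<and> (\<forall>M::real. size (filter_mset (\<lambda>x. l x \<ge> M) A) \<ge> DIM('a) * n + 1
            \<longrightarrow> (\<forall>z\<in>Psi A n. l z \<ge> M))"
proof -
  have size_sub: "size A - n = DIM('a) * n + 1" using assms(1) by (simp add: algebra_simps)
  have "Psi A n \<subseteq> {x. l x \<le> m}" if "size (filter_mset (\<lambda>x. l x \<le> m) A) \<ge> DIM('a) * n + 1" for m
    using that size_sub by (intro Psi_subset_convex convex_linear_sublevel[OF assms(2)]) simp
  moreover have "Psi A n \<subseteq> {x. l x \<ge> M}" if "size (filter_mset (\<lambda>x. l x \<ge> M) A) \<ge> DIM('a) * n + 1" for M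
    using that size_sub by (intro Psi_subset_convex convex_linear_superlevel[OF assms(2)]) simp
  ultimately show ?thesis by blast
qed

end
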